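(* There is an absolute constant $C$ such that for every integer $d\ge2$, every $n$, every $t$ and all sets $S_1,\dots,S_t\subseteq[n]$, the function $f\colon\mathbb F_2^n\to\{0,1\}$ defined by $f(x)=1$ if $\big|\{j\in[t]: \exists i\in S_j,\ x_i=1\}\big|\ge d+1$ and $f(x)=0$ otherwise satisfies $R^{lin}_{1/3}(f)\le C d^2\log d$.
   Context: For $S\subseteq[n]$, $\chi_S(x)=\sum_{i\in S}x_i\pmod 2$. Exact randomized $\mathbb F_2$-sketch complexity: for $f\colon\mathbb F_2^n\to\mathbb R$ and $\delta\in[0,1]$, $R^{lin}_\delta(f)$ is the smallest integer $k$ such that there exists a probability distribution over $k$-tuples of subsets $\mathbf S_1,\dots,\mathbf S_k\subseteq[n]$ and a function $g\colon\mathbb F_2^k\to\mathbb R$ with $\Pr_{\mathbf S_1,\dots,\mathbf S_k}[g(\chi_{\mathbf S_1}(x),\dots,\chi_{\mathbf S_k}(x))=f(x)]\ge1-\delta$ for every $x\in\mathbb F_2^n$. *)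

theory Defs
  imports "HOL-Probability.Probability"
begin

text \<open>Vectors in F_2^n are modelled as functions nat => bool that vanish
  outside [n] = {0..<n}; the value True stands for 1 in F_2.\<close>

definition cube :: "nat \<Rightarrow> (nat \<Rightarrow> bool) set" where
  "cube n = {x. \<forall>i\<ge>n. \<not> x i}"

definition chi :: "nat set \<Rightarrow> (nat \<Rightarrow> bool) \<Rightarrow> bool" where
  "chi S x = odd (card {i \<in> S. x i})"

definition sketchable :: "nat \<Rightarrow> ((nat \<Rightarrow> bool) \<Rightarrow> real) \<Rightarrow> real \<Rightarrow> nat \<Rightarrow> bool" where
  "sketchable n f \<delta> k \<longleftrightarrow>
     (\<exists>(P :: nat set list pmf) (g :: bool list \<Rightarrow> real).
        (\<forall>Ss \<in> set_pmf P. length Ss = k \<and> (\<forall>S \<in> set Ss. S \<subseteq> {..<n})) \<and>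
        (\<forall>x \<in> cube n.
           measure_pmf.prob P {Ss. g (map (\<lambda>S. chi S x) Ss) = f x} \<ge> 1 - \<delta>))"

definition R_lin :: "nat \<Rightarrow> ((nat \<Rightarrow> bool) \<Rightarrow> real) \<Rightarrow> real \<Rightarrow> nat" where
  "R_lin n f \<delta> = (LEAST k. sketchable n f \<delta> k)"

end

theory Submission
  imports Defs "HOL-Analysis.Harmonic_Numbers"
begin

text \<open>Hash the \<open>t\<close> sets into \<open>B\<close> buckets by a uniformly random function \<open>h\<close>, and test each
  bucket \<open>r\<close> times: a test is the parity \<open>chi (T \<inter> U) x\<close> for a uniformly random \<open>T \<subseteq> [n]\<close>,
  where \<open>U\<close> is the union of the sets in the bucket. Such a parity is always 0 if \<open>x\<close>
  vanishes on \<open>U\<close> and is 1 with probability 1/2 otherwise. The decoder counts the buckets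
  with an odd test. It never overcounts, since an odd test exhibits a set of the bucket
  that \<open>x\<close> hits; it undercounts only if \<open>h\<close> is not injective on some fixed \<open>d + 1\<close> hit sets
  (probability at most \<open>(d + 1)\<^sup>2 / B\<close>) or one of their buckets has only even tests
  (probability at most \<open>(d + 1) / 2\<^sup>r\<close>). Taking \<open>B = 6(d + 1)\<^sup>2\<close> and \<open>2\<^sup>r \<ge> 6(d + 1)\<close>
  gives error at most 1/3 with \<open>B r = O(d\<^sup>2 log d)\<close> parities.\<close>

lemma card_Pow_even_eq_odd:
  assumes "finite V" "i \<in> V" "i \<in> W"
  shows "card {A \<in> Pow V. even (card (A \<inter> W))} = card {A \<in> Pow V. odd (card (A \<inter> W))}"
proof -
  let ?toggle = "\<lambda>A. sym_diff A {i}"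
  have parity: "even (card (?toggle A \<inter> W)) \<longleftrightarrow> odd (card (A \<inter> W))" if "A \<subseteq> V" for A
  proof (cases "i \<in> A")
    case True
    then have "?toggle A \<inter> W = (A \<inter> W) - {i}" by auto
    moreover have "i \<in> A \<inter> W" "finite (A \<inter> W)" using True assms that finite_subset by auto
    ultimately have "card (A \<inter> W) = Suc (card (?toggle A \<inter> W))"
      by (metis card_Suc_Diff1)
    then show ?thesis by simp
  next
    case False
    then have "?toggle A \<inter> W = insert i (A \<inter> W)" using assms by auto
    moreover have "finite (A \<inter> W)" using assms that finite_subset by blast
    ultimately show ?thesis using False by simp
  qed
  have "bij_betw ?toggle {A \<in> Pow V. even (card (A \<inter> W))} {A \<in> Pow V. odd (card (A \<inter> W))}"
    by (rule bij_betw_byWitness[where f' = ?toggle]) (use assms parity in auto)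
  then show ?thesis by (rule bij_betw_same_card)
qed

lemma prob_even_card_Int_Pow:
  assumes "finite V" "V \<inter> W \<noteq> {}"
  shows "measure_pmf.prob (pmf_of_set (Pow V)) {A. even (card (A \<inter> W))} = 1/2"
proof -
  obtain i where i: "i \<in> V" "i \<in> W" using assms(2) by blast
  let ?E = "{A \<in> Pow V. even (card (A \<inter> W))}" and ?O = "{A \<in> Pow V. odd (card (A \<inter> W))}"
  have "card (Pow V) = card ?E + card ?O"
    using assms(1) by (subst card_Un_disjoint[symmetric]) (auto intro!: arg_cong[where f = card])
  then have "card (Pow V) = 2 * card ?E" using card_Pow_even_eq_odd[OF assms(1) i] by simp
  moreover have "Pow V \<inter> {A. even (card (A \<inter> W))} = ?E" by auto
  moreover have "card ?E \<noteq> 0" using assms(1) by (auto intro!: exI[of _ "{}"])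
  ultimately show ?thesis using assms(1) by (simp add: measure_pmf_of_set Pow_not_empty)
qed

lemma prob_Pi_pmf_all_even:
  assumes "finite I" "J \<subseteq> I" "finite V" "V \<inter> W \<noteq> {}"
  shows "measure_pmf.prob (Pi_pmf I dflt (\<lambda>_. pmf_of_set (Pow V)))
           {T. \<forall>m\<in>J. even (card (T m \<inter> W))} = (1/2) ^ card J"
proof -
  define F where "F m = (if m \<in> J then {A. even (card (A \<inter> W))} else UNIV)" for m
  have "{T. \<forall>m\<in>J. even (card (T m \<inter> W))} = Pi I F"
    using assms(2) by (auto simp: F_def Pi_def)
  moreover have "measure_pmf.prob (Pi_pmf I dflt (\<lambda>_. pmf_of_set (Pow V))) (Pi I F)
      = (\<Prod>m\<in>I. if m \<in> J then 1/2 else 1)"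
    using prob_even_card_Int_Pow[OF assms(3,4)] assms(1)
    by (subst measure_Pi_pmf_Pi) (auto simp: F_def if_distrib cong: if_cong intro!: prod.cong)
  moreover have "(\<Prod>m\<in>I. if m \<in> J then 1/2 else 1) = ((1/2::real) ^ card J)"
    using assms(1,2) by (simp add: prod.inter_filter[symmetric] Int_absorb1 Collect_conj_eq inf.absorb2)
  ultimately show ?thesis by simp
qed

lemma prob_Pi_pmf_collision_le:
  fixes I :: "'a set" and V :: "'b set"
  assumes "finite I" "j \<in> I" "j' \<in> I" "j \<noteq> j'" "finite V" "V \<noteq> {}"
  shows "measure_pmf.prob (Pi_pmf I dflt (\<lambda>_. pmf_of_set V)) {h. h j = h j'} \<le> 1 / card V"
proof -
  let ?H = "Pi_pmf I dflt (\<lambda>_. pmf_of_set V)"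
  define F :: "'b \<Rightarrow> 'a \<Rightarrow> 'b set" where "F v k = (if k = j \<or> k = j' then {v} else UNIV)" for v k
  have "set_pmf ?H \<subseteq> {h. h j \<in> V}"
    using assms by (auto simp: set_Pi_pmf PiE_dflt_def)
  then have "{h. h j = h j'} \<inter> set_pmf ?H \<subseteq> (\<Union>v\<in>V. Pi I (F v))"
    by (auto simp: F_def)
  have cell: "measure_pmf.prob ?H (Pi I (F v)) = (1 / card V) ^ 2" if "v \<in> V" for v
  proof -
    have "measure_pmf.prob (pmf_of_set V) (F v k) = (if k = j \<or> k = j' then 1 / card V else 1)" for k
      using assms that by (auto simp: F_def measure_pmf_of_set Int_absorb1)
    then have "measure_pmf.prob ?H (Pi I (F v)) = (\<Prod>k\<in>I. if k = j \<or> k = j' then 1 / card V else 1)"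
      using assms(1) by (simp add: measure_Pi_pmf_Pi)
    also have "\<dots> = (1 / card V) ^ card {k \<in> I. k = j \<or> k = j'}"
      using assms(1) by (simp add: prod.inter_filter[symmetric])
    also have "{k \<in> I. k = j \<or> k = j'} = {j, j'}" using assms by auto
    finally show ?thesis using assms(4) by (simp add: power2_eq_square)
  qed
  have "measure_pmf.prob ?H {h. h j = h j'} = measure_pmf.prob ?H ({h. h j = h j'} \<inter> set_pmf ?H)"
    by (simp add: measure_Int_set_pmf)
  also have "\<dots> \<le> measure_pmf.prob ?H (\<Union>v\<in>V. Pi I (F v))"
    using \<open>_ \<subseteq> (\<Union>v\<in>V. Pi I (F v))\<close> by (intro measure_pmf.finite_measure_mono) auto
  also have "\<dots> \<le> (\<Sum>v\<in>V. measure_pmf.prob ?H (Pi I (F v)))"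
    using assms(5) by (intro measure_pmf.finite_measure_subadditive_finite) auto
  also have "\<dots> = 1 / card V"
    using cell assms(5,6) by (simp add: power2_eq_square)
  finally show ?thesis .
qed

lemma prob_Pi_pmf_not_inj_on_le:
  assumes "finite I" "D \<subseteq> I" "finite V" "V \<noteq> {}"
  shows "measure_pmf.prob (Pi_pmf I dflt (\<lambda>_. pmf_of_set V)) {h. \<not> inj_on h D}
           \<le> card D ^ 2 / card V"
proof -
  let ?H = "Pi_pmf I dflt (\<lambda>_. pmf_of_set V)"
  define Pairs where "Pairs = {p \<in> D \<times> D. fst p \<noteq> snd p}"
  have fin: "finite D" using assms finite_subset by blast
  have "card Pairs \<le> card D ^ 2"
    using card_mono[of "D \<times> D" Pairs] fin by (auto simp: Pairs_def card_cartesian_product power2_eq_square)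
  have "measure_pmf.prob ?H {h. \<not> inj_on h D}
      \<le> measure_pmf.prob ?H (\<Union>p\<in>Pairs. {h. h (fst p) = h (snd p)})"
    by (intro measure_pmf.finite_measure_mono) (auto simp: Pairs_def inj_on_def)
  also have "\<dots> \<le> (\<Sum>p\<in>Pairs. measure_pmf.prob ?H {h. h (fst p) = h (snd p)})"
    using fin by (intro measure_pmf.finite_measure_subadditive_finite) (auto simp: Pairs_def)
  also have "\<dots> \<le> (\<Sum>p\<in>Pairs. 1 / card V)"
    using assms by (intro sum_mono prob_Pi_pmf_collision_le) (auto simp: Pairs_def)
  also have "\<dots> \<le> card D ^ 2 / card V"
    using \<open>card Pairs \<le> card D ^ 2\<close> by (simp add: divide_right_mono)
  finally show ?thesis .
qed

lemma measure_bind_pmf_le: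
  assumes "\<And>x. x \<in> set_pmf p \<Longrightarrow> x \<notin> N \<Longrightarrow> measure_pmf.prob (q x) A \<le> e" "0 \<le> e"
  shows "measure_pmf.prob (bind_pmf p q) A \<le> measure_pmf.prob p N + e"
proof -
  have "emeasure (bind_pmf p q) A \<le> (\<integral>\<^sup>+x. (indicator N x + ennreal e) \<partial>p)"
    unfolding emeasure_bind_pmf
  proof (intro nn_integral_mono_AE, unfold AE_measure_pmf_iff, intro ballI)
    fix x assume "x \<in> set_pmf p"
    then show "emeasure (q x) A \<le> indicator N x + ennreal e"
    proof (cases "x \<in> N")
      case True
      have "emeasure (q x) A \<le> 1" by (rule measure_pmf.emeasure_le_1)
      then show ?thesis using True by (simp add: order_trans[OF _ add_increasing2])
    qed (use assms in \<open>auto simp: measure_pmf.emeasure_eq_measure\<close>)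
  qed
  also have "\<dots> = ennreal (measure_pmf.prob p N + e)"
    using assms(2) by (subst nn_integral_add)
      (auto simp: measure_pmf.emeasure_space_1 measure_pmf.emeasure_eq_measure ennreal_plus)
  finally show ?thesis
    using assms(2) by (simp add: measure_pmf.emeasure_eq_measure ennreal_le_iff del: ennreal_plus)
qed

lemma card_div_eq:
  assumes "b < B" "0 < r"
  shows "card {m \<in> {..<B * r}. m div r = b} = r"
proof -
  have "{m \<in> {..<B * r}. m div r = b} = {b * r..<b * r + r}"
  proof -
    have "b * r + r \<le> B * r" using assms(1) mult_le_mono1[of "Suc b" B r] by simp
    moreover have "m div r * r \<le> m" "m < m div r * r + r" for m
      using assms(2) div_times_less_eq_dividend[of m r] dividend_less_div_times[of r m]
      by (simp_all add: mult.commute)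
    ultimately show ?thesis using assms by (auto simp: div_nat_eqI mult.commute)
  qed
  then show ?thesis by simp
qed

locale threshold_sketch =
  fixes n t :: nat and S :: "nat \<Rightarrow> nat set" and d B r :: nat
  assumes S_subset: "\<And>j. j < t \<Longrightarrow> S j \<subseteq> {..<n}"
    and B_pos: "0 < B" and r_pos: "0 < r"
begin

definition hits :: "(nat \<Rightarrow> bool) \<Rightarrow> nat set" where
  "hits x = {j \<in> {..<t}. \<exists>i \<in> S j. x i}"

definition threshold :: "(nat \<Rightarrow> bool) \<Rightarrow> real" where
  "threshold x = (if d + 1 \<le> card (hits x) then 1 else 0)"

definition hash_pmf :: "(nat \<Rightarrow> nat) pmf" where
  "hash_pmf = Pi_pmf {..<t} 0 (\<lambda>_. pmf_of_set {..<B})"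

definition tests_pmf :: "(nat \<Rightarrow> nat set) pmf" where
  "tests_pmf = Pi_pmf {..<B * r} {} (\<lambda>_. pmf_of_set (Pow {..<n}))"

definition bucket :: "(nat \<Rightarrow> nat) \<Rightarrow> nat \<Rightarrow> nat set" where
  "bucket h b = (\<Union>j \<in> {j \<in> {..<t}. h j = b}. S j)"

text \<open>Coordinate \<open>m\<close> of the sketch is the \<open>m\<close>-th test restricted to bucket \<open>m div r\<close>,
  so every bucket \<open>b < B\<close> receives the \<open>r\<close> tests \<open>b r, \<dots>, b r + r - 1\<close>.\<close>

definition sketch :: "(nat \<Rightarrow> nat) \<Rightarrow> (nat \<Rightarrow> nat set) \<Rightarrow> nat set list" where
  "sketch h T = map (\<lambda>m. T m \<inter> bucket h (m div r)) [0..<B * r]"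

definition sketch_pmf :: "nat set list pmf" where
  "sketch_pmf = bind_pmf hash_pmf (\<lambda>h. map_pmf (sketch h) tests_pmf)"

definition decode :: "bool list \<Rightarrow> real" where
  "decode bs = (if d + 1 \<le> card ((\<lambda>m. m div r) ` {m. m < length bs \<and> bs ! m}) then 1 else 0)"

definition detected :: "(nat \<Rightarrow> bool) \<Rightarrow> (nat \<Rightarrow> nat) \<Rightarrow> (nat \<Rightarrow> nat set) \<Rightarrow> nat set" where
  "detected x h T = (\<lambda>m. m div r) ` {m \<in> {..<B * r}. chi (T m \<inter> bucket h (m div r)) x}"

lemma set_hash_pmf_less:
  assumes "h \<in> set_pmf hash_pmf" "j < t"
  shows "h j < B"
proof -
  have "set_pmf (pmf_of_set {..<B}) = {..<B}" using B_pos by (intro set_pmf_of_set) auto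
  then show ?thesis using assms by (auto simp: hash_pmf_def set_Pi_pmf PiE_dflt_def)
qed

lemma bucket_subset: "bucket h b \<subseteq> {..<n}"
  using S_subset by (auto simp: bucket_def)

lemma set_sketch_pmf:
  assumes "Ss \<in> set_pmf sketch_pmf"
  shows "length Ss = B * r" "\<forall>A \<in> set Ss. A \<subseteq> {..<n}"
  using assms by (auto simp: sketch_pmf_def sketch_def dest!: bucket_subset[THEN subsetD])

lemma decode_sketch:
  "decode (map (\<lambda>A. chi A x) (sketch h T)) = (if d + 1 \<le> card (detected x h T) then 1 else 0)"
proof -
  have "{m. m < length (map (\<lambda>A. chi A x) (sketch h T)) \<and> map (\<lambda>A. chi A x) (sketch h T) ! m}
      = {m \<in> {..<B * r}. chi (T m \<inter> bucket h (m div r)) x}"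
    by (auto simp: sketch_def)
  then show ?thesis by (simp add: decode_def detected_def)
qed

lemma detected_subset_hits: "detected x h T \<subseteq> h ` hits x"
proof
  fix b assume "b \<in> detected x h T"
  then obtain m where "b = m div r" "chi (T m \<inter> bucket h b) x"
    by (auto simp: detected_def)
  then have "{i \<in> T m \<inter> bucket h b. x i} \<noteq> {}"
    unfolding chi_def by (metis card.empty even_zero)
  then obtain j i where "j < t" "h j = b" "i \<in> S j" "x i"
    by (auto simp: bucket_def)
  then show "b \<in> h ` hits x" by (auto simp: hits_def)
qed

lemma card_detected_le: "card (detected x h T) \<le> card (hits x)"
proof -
  have "card (detected x h T) \<le> card (h ` hits x)"
    using detected_subset_hits by (intro card_mono) (auto simp: hits_def)
  also have "\<dots> \<le> card (hits x)" by (rule card_image_le) (simp add: hits_def)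
  finally show ?thesis .
qed

lemma prob_bucket_undetected:
  assumes "h j < B" "j \<in> hits x"
  shows "measure_pmf.prob tests_pmf {T. h j \<notin> detected x h T} = (1/2) ^ r"
proof -
  define J where "J = {m \<in> {..<B * r}. m div r = h j}"
  define W where "W = {i \<in> bucket h (h j). x i}"
  obtain i where "i \<in> S j" "x i" "j < t" using assms(2) by (auto simp: hits_def)
  then have "i \<in> {..<n} \<inter> W" using S_subset by (auto simp: W_def bucket_def)
  have chi_eq: "chi (A \<inter> bucket h (h j)) x \<longleftrightarrow> odd (card (A \<inter> W))" for A
  proof -
    have "{i \<in> A \<inter> bucket h (h j). x i} = A \<inter> W" by (auto simp: W_def)
    then show ?thesis by (simp add: chi_def)
  qed
  have "h j \<in> detected x h T \<longleftrightarrow> (\<exists>m\<in>J. chi (T m \<inter> bucket h (h j)) x)" for T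
    by (auto simp: detected_def J_def image_iff)
  then have "{T. h j \<notin> detected x h T} = {T. \<forall>m\<in>J. even (card (T m \<inter> W))}"
    by (simp add: chi_eq)
  also have "measure_pmf.prob tests_pmf \<dots> = (1/2) ^ card J"
    unfolding tests_pmf_def
    by (rule prob_Pi_pmf_all_even) (use \<open>i \<in> {..<n} \<inter> W\<close> in \<open>auto simp: J_def\<close>)
  also have "card J = r" using card_div_eq[OF assms(1) r_pos] by (simp add: J_def)
  finally show ?thesis .
qed

lemma prob_undercount_le:
  assumes "h \<in> set_pmf hash_pmf" "D \<subseteq> hits x" "card D = d + 1" "inj_on h D"
  shows "measure_pmf.prob tests_pmf {T. card (detected x h T) < d + 1} \<le> (d + 1) / 2 ^ r"
proof -
  have fin: "finite D" using assms(2) by (rule finite_subset) (simp add: hits_def)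
  have "{T. card (detected x h T) < d + 1} \<subseteq> (\<Union>j\<in>D. {T. h j \<notin> detected x h T})"
  proof (intro subsetI, rule ccontr)
    fix T assume "T \<in> {T. card (detected x h T) < d + 1}"
      and "T \<notin> (\<Union>j\<in>D. {T. h j \<notin> detected x h T})"
    then have "h ` D \<subseteq> detected x h T" "card (detected x h T) < card (h ` D)"
      using assms(3,4) by (auto simp: card_image)
    then show False using card_mono[of "detected x h T" "h ` D"] by (auto simp: detected_def)
  qed
  then have "measure_pmf.prob tests_pmf {T. card (detected x h T) < d + 1}
      \<le> measure_pmf.prob tests_pmf (\<Union>j\<in>D. {T. h j \<notin> detected x h T})"
    by (intro measure_pmf.finite_measure_mono) auto
  also have "\<dots> \<le> (\<Sum>j\<in>D. measure_pmf.prob tests_pmf {T. h j \<notin> detected x h T})"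
    using fin by (intro measure_pmf.finite_measure_subadditive_finite) auto
  also have "\<dots> = (\<Sum>j\<in>D. (1/2) ^ r)"
  proof (intro sum.cong refl prob_bucket_undetected)
    fix j assume "j \<in> D"
    then show "j \<in> hits x" using assms(2) by auto
    then show "h j < B" using assms(1) set_hash_pmf_less by (simp add: hits_def)
  qed
  also have "\<dots> = (d + 1) / 2 ^ r" using assms(3) by (simp add: power_one_over)
  finally show ?thesis .
qed

lemma prob_sketch_error_le:
  "measure_pmf.prob sketch_pmf {Ss. decode (map (\<lambda>A. chi A x) Ss) \<noteq> threshold x}
     \<le> (d + 1) ^ 2 / B + (d + 1) / 2 ^ r"
  (is "measure_pmf.prob _ ?Err \<le> _")
proof (cases "card (hits x) \<le> d")
  case True
  have "decode (map (\<lambda>A. chi A x) (sketch h T)) = threshold x" for h T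
    using True card_detected_le[of x h T] by (simp add: decode_sketch threshold_def)
  then have "set_pmf sketch_pmf \<inter> ?Err = {}" by (auto simp: sketch_pmf_def)
  then have "measure_pmf.prob sketch_pmf ?Err = 0" by (simp add: measure_pmf_zero_iff)
  then show ?thesis by simp
next
  case False
  then have "d + 1 \<le> card (hits x)" by simp
  then obtain D where D: "D \<subseteq> hits x" "card D = d + 1"
    by (meson obtain_subset_with_card_n)
  have "measure_pmf.prob sketch_pmf ?Err
      \<le> measure_pmf.prob hash_pmf {h. \<not> inj_on h D} + (d + 1) / 2 ^ r"
    unfolding sketch_pmf_def
  proof (rule measure_bind_pmf_le)
    fix h assume h: "h \<in> set_pmf hash_pmf" "h \<notin> {h. \<not> inj_on h D}"
    have "sketch h -` ?Err \<subseteq> {T. card (detected x h T) < d + 1}"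
      using False by (auto simp: decode_sketch threshold_def split: if_splits)
    then have "measure_pmf.prob tests_pmf (sketch h -` ?Err)
        \<le> measure_pmf.prob tests_pmf {T. card (detected x h T) < d + 1}"
      by (intro measure_pmf.finite_measure_mono) auto
    then show "measure_pmf.prob (map_pmf (sketch h) tests_pmf) ?Err \<le> (d + 1) / 2 ^ r"
      using prob_undercount_le[OF h(1) D] h(2) by simp
  qed (rule divide_nonneg_pos; simp)
  also have "measure_pmf.prob hash_pmf {h. \<not> inj_on h D} \<le> (d + 1) ^ 2 / B"
    using prob_Pi_pmf_not_inj_on_le[of "{..<t}" D "{..<B}" 0] D B_pos
    by (auto simp: hash_pmf_def hits_def)
  finally show ?thesis by simp
qed

lemma sketchable_threshold:
  assumes "6 * (d + 1) ^ 2 \<le> B" "6 * (d + 1) \<le> 2 ^ r"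
  shows "sketchable n threshold (1/3) (B * r)"
proof -
  have "6 * (real d + 1) ^ 2 \<le> B" "6 * (real d + 1) \<le> 2 ^ r"
    using of_nat_mono[OF assms(1), where 'a = real] of_nat_mono[OF assms(2), where 'a = real]
    by (simp_all add: ac_simps)
  then have small: "(d + 1) ^ 2 / B + (d + 1) / 2 ^ r \<le> 1/6 + (1/6 :: real)"
    using B_pos by (intro add_mono) (simp_all add: field_simps)
  have "measure_pmf.prob sketch_pmf {Ss. decode (map (\<lambda>A. chi A x) Ss) = threshold x} \<ge> 1 - 1/3"
    for x
  proof -
    let ?Err = "{Ss. decode (map (\<lambda>A. chi A x) Ss) \<noteq> threshold x}"
    have "measure_pmf.prob sketch_pmf (UNIV - ?Err) = 1 - measure_pmf.prob sketch_pmf ?Err"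
      using measure_pmf.prob_compl[of ?Err sketch_pmf] by simp
    moreover have "UNIV - ?Err = {Ss. decode (map (\<lambda>A. chi A x) Ss) = threshold x}" by auto
    ultimately have "measure_pmf.prob sketch_pmf {Ss. decode (map (\<lambda>A. chi A x) Ss) = threshold x}
        = 1 - measure_pmf.prob sketch_pmf ?Err" by simp
    with prob_sketch_error_le[of x] small show ?thesis by linarith
  qed
  then show ?thesis
    unfolding sketchable_def using set_sketch_pmf by blast
qed

end

lemma exists_exponent_le_ln:
  fixes d :: nat
  assumes "2 \<le> d"
  obtains r :: nat where "0 < r" "6 * (d + 1) \<le> 2 ^ r" "real r \<le> 9 * ln (real d)"
proof
  define y where "y = real (6 * (d + 1))"
  define r where "r = nat \<lceil>log 2 y\<rceil>"
  have "18 \<le> y" using assms by (simp add: y_def)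
  then have "0 < log 2 y" by simp
  then have r: "log 2 y \<le> real r" "real r < log 2 y + 1"
    unfolding r_def by linarith+
  then show "0 < r" using \<open>0 < log 2 y\<close> by simp
  have "y = 2 powr (log 2 y)" using \<open>18 \<le> y\<close> by simp
  also have "\<dots> \<le> 2 ^ r" using r(1) by (simp add: powr_realpow[symmetric])
  finally have "real (6 * (d + 1)) \<le> real ((2::nat) ^ r)" by (simp add: y_def)
  then show "6 * (d + 1) \<le> 2 ^ r" by (simp only: of_nat_le_iff)
  have "1 \<le> log 2 (real d)" using assms by simp
  have "real r < log 2 (2 * y)" using r \<open>18 \<le> y\<close> by (simp add: log_mult)
  also have "\<dots> \<le> log 2 (32 * real d)" using assms by (simp add: y_def)
  also have "\<dots> = log 2 (2 ^ 5) + log 2 (real d)" using assms by (simp add: log_mult)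
  also have "\<dots> = 5 + log 2 (real d)" by (subst log_pow_cancel) simp_all
  also have "\<dots> \<le> 6 * log 2 (real d)" using \<open>1 \<le> log 2 (real d)\<close> by simp
  also have "\<dots> = 6 * ln (real d) / ln 2" by (simp add: log_def)
  also have "\<dots> \<le> 9 * ln (real d)"
    using ln2_ge_two_thirds assms by (simp add: field_simps)
  finally show "real r \<le> 9 * ln (real d)" by simp
qed

lemma sketch_size_le:
  fixes d r :: nat
  assumes "2 \<le> d" "real r \<le> 9 * ln (real d)"
  shows "real (6 * (d + 1) ^ 2 * r) \<le> 122 * real d ^ 2 * ln (real d)"
proof -
  have "(real d + 1) ^ 2 \<le> (3/2 * real d) ^ 2" using assms(1) by (intro power_mono) auto
  moreover have "real (6 * (d + 1) ^ 2) = 6 * (real d + 1) ^ 2" by simp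
  moreover have "(3/2 * real d) ^ 2 = 9/4 * real d ^ 2" by (simp add: power2_eq_square)
  ultimately have "real (6 * (d + 1) ^ 2) \<le> 27/2 * real d ^ 2" by linarith
  then have "real (6 * (d + 1) ^ 2) * real r \<le> 27/2 * real d ^ 2 * (9 * ln (real d))"
    using assms(2) by (rule mult_mono) simp_all
  then have "real (6 * (d + 1) ^ 2 * r) \<le> 27/2 * real d ^ 2 * (9 * ln (real d))"
    by (simp only: of_nat_mult)
  also have "\<dots> \<le> 122 * real d ^ 2 * ln (real d)" using assms(1) by simp
  finally show ?thesis .
qed

theorem mainTheorem4:
  shows "\<exists>C::real. \<forall>(d::nat) (n::nat) (t::nat) (S :: nat \<Rightarrow> nat set).
     d \<ge> 2 \<longrightarrow> (\<forall>j<t. S j \<subseteq> {..<n}) \<longrightarrow>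
     real (R_lin n (\<lambda>x. if card {j \<in> {..<t}. \<exists>i \<in> S j. x i} \<ge> d + 1 then 1 else 0) (1/3))
       \<le> C * real d ^ 2 * ln (real d)"
proof (intro exI[of _ 122] allI impI)
  fix d n t :: nat and S :: "nat \<Rightarrow> nat set"
  assume d: "2 \<le> d" and S: "\<forall>j<t. S j \<subseteq> {..<n}"
  obtain r where r: "0 < r" "6 * (d + 1) \<le> 2 ^ r" "real r \<le> 9 * ln (real d)"
    using exists_exponent_le_ln[OF d] .
  interpret threshold_sketch n t S d "6 * (d + 1) ^ 2" r
    using S r(1) by unfold_locales auto
  have "sketchable n threshold (1/3) (6 * (d + 1) ^ 2 * r)"
    using r(2) by (intro sketchable_threshold) simp_all
  then have "R_lin n threshold (1/3) \<le> 6 * (d + 1) ^ 2 * r"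
    unfolding R_lin_def by (rule Least_le)
  then have "real (R_lin n threshold (1/3)) \<le> real (6 * (d + 1) ^ 2 * r)"
    by (simp only: of_nat_le_iff)
  also have "\<dots> \<le> 122 * real d ^ 2 * ln (real d)"
    by (rule sketch_size_le[OF d r(3)])
  also have "threshold = (\<lambda>x. if card {j \<in> {..<t}. \<exists>i \<in> S j. x i} \<ge> d + 1 then 1 else 0)"
    by (simp add: fun_eq_iff threshold_def hits_def)
  finally show "real (R_lin n (\<lambda>x. if card {j \<in> {..<t}. \<exists>i \<in> S j. x i} \<ge> d + 1 then 1 else 0) (1/3))
      \<le> 122 * real d ^ 2 * ln (real d)" .
qed

end
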